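(* Let $F_2$ be the free group on $\{x,y\}$, $\sigma = (\{x\}, y)$, $\tau = (\{y\}, x)$. Let $w$ be a cyclic word in $F_2$ and let $\psi$ be a chain of the form (C1) $\tau^{m_k}\sigma^{l_k} \cdots \tau^{m_1}\sigma^{l_1}$ (respectively (C2) $\tau^{-m_k}\sigma^{-l_k} \cdots \tau^{-m_1}\sigma^{-l_1}$), with $k\in\mathbb{N}$ and all $l_i, m_i \ge 0$. If $\psi$ contains at least $\|w\|$ factors of $\sigma$ (respectively $\sigma^{-1}$), i.e. $\sum_i l_i \ge \|w\|$, then no proper cancellation occurs in passing from $\psi(w)$ to $\sigma\psi(w)$ (respectively from $\psi(w)$ to $\sigma^{-1}\psi(w)$). If $\psi$ contains at least $\|w\|$ factors of $\tau$ (respectively $\tau^{-1}$), i.e. $\sum_i m_i \ge \|w\|$, then no proper cancellation occurs in passing from $\psi(w)$ to $\tau\psi(w)$ (respectively from $\psi(w)$ to $\tau^{-1}\psi(w)$).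
   Context: $\sigma$ is the automorphism with $\sigma(x) = xy$, $\sigma(y) = y$; $\tau$ is the automorphism with $\tau(y) = yx$, $\tau(x) = x$. A cyclic word is the set of all cyclic permutations of a cyclically reduced word; $\|w\|$ is its length. An automorphism $\alpha \in \{\sigma^{\pm1},\tau^{\pm1}\}$ is applied to a cyclic word $w$ by replacing each letter $c$ by $\alpha(c)$ and cyclically freely reducing. For $\alpha = \sigma^{\pm1}$, a subword $xy^rx^{-1}$ ($r \neq 0$) of $w$ is mapped to itself although cancellation occurs in its image (e.g. $\sigma(xy^rx^{-1}) = xy\cdot y^r\cdot y^{-1}x^{-1}$); similarly for $\alpha=\tau^{\pm1}$ and subwords $yx^ry^{-1}$ ($r\neq 0$). Such cancellation is called trivial cancellation; any cancellation that is not trivial is called proper cancellation (e.g. $\sigma$ applied to a subword $xy^{-r}x$, $r\ge1$, yields $xy^{-r+1}xy$, which involves proper cancellation). *)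

theory Defs
  imports Main
begin

text \<open>Letters of the free group F_2 on {x,y}: a generator together with a sign
  (True = positive exponent, False = inverse). Words are lists of letters.\<close>

datatype gen = X | Y

type_synonym letter = "gen \<times> bool"
type_synonym word = "letter list"

definition inv_letter :: "letter \<Rightarrow> letter" where
  "inv_letter a = (fst a, \<not> snd a)"

definition freely_reduced :: "word \<Rightarrow> bool" where
  "freely_reduced w \<longleftrightarrow> (\<forall>i. Suc i < length w \<longrightarrow> w ! Suc i \<noteq> inv_letter (w ! i))"

text \<open>Cyclically reduced word (a representative of a cyclic word).\<close>
definition cyc_reduced :: "word \<Rightarrow> bool" where
  "cyc_reduced w \<longleftrightarrow> freely_reduced w \<and> (2 \<le> length w \<longrightarrow> last w \<noteq> inv_letter (hd w))"

definition free_reduce :: "word \<Rightarrow> word" where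
  "free_reduce w = foldr (\<lambda>a acc. case acc of [] \<Rightarrow> [a]
       | b # r \<Rightarrow> (if b = inv_letter a then r else a # acc)) w []"

function cyc_strip :: "word \<Rightarrow> word" where
  "cyc_strip w = (if 2 \<le> length w \<and> last w = inv_letter (hd w)
                   then cyc_strip (butlast (tl w)) else w)"
  by pat_completeness auto
termination by (relation "measure length") auto

definition cyc_reduce :: "word \<Rightarrow> word" where
  "cyc_reduce w = cyc_strip (free_reduce w)"

text \<open>The automorphisms sigma, sigma^-1, tau, tau^-1.
  sigma(x) = xy, sigma(y) = y; tau(y) = yx, tau(x) = x.\<close>
datatype aut = Sig | SigInv | Tau | TauInv

fun img :: "aut \<Rightarrow> letter \<Rightarrow> word" where
  "img Sig (X, True) = [(X, True), (Y, True)]"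
| "img Sig (X, False) = [(Y, False), (X, False)]"
| "img SigInv (X, True) = [(X, True), (Y, False)]"
| "img SigInv (X, False) = [(Y, True), (X, False)]"
| "img Tau (Y, True) = [(Y, True), (X, True)]"
| "img Tau (Y, False) = [(X, False), (Y, False)]"
| "img TauInv (Y, True) = [(Y, True), (X, False)]"
| "img TauInv (Y, False) = [(X, True), (Y, False)]"
| "img _ c = [c]"

definition apply_aut :: "aut \<Rightarrow> word \<Rightarrow> word" where
  "apply_aut \<alpha> w = cyc_reduce (concat (map (img \<alpha>) w))"

text \<open>The chain  a^(m_k) b^(l_k) ... a^(m_1) b^(l_1)  applied to w
  (b^(l_1) is applied first). For (C1) a = Tau, b = Sig; for (C2) a = TauInv, b = SigInv.\<close>
fun chain :: "aut \<Rightarrow> aut \<Rightarrow> (nat \<Rightarrow> nat) \<Rightarrow> (nat \<Rightarrow> nat) \<Rightarrow> nat \<Rightarrow> word \<Rightarrow> word" where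
  "chain a b l m 0 w = w"
| "chain a b l m (Suc i) w =
     (apply_aut a ^^ m (Suc i)) ((apply_aut b ^^ l (Suc i)) (chain a b l m i w))"

definition cancel_at :: "aut \<Rightarrow> word \<Rightarrow> nat \<Rightarrow> bool" where
  "cancel_at \<alpha> u i \<longleftrightarrow>
     last (img \<alpha> (u ! i)) = inv_letter (hd (img \<alpha> (u ! (Suc i mod length u))))"

text \<open>The generator g1 conjugating in the special subwords: x for sigma^{+-1}
  (subwords x y^r x^-1), y for tau^{+-1} (subwords y x^r y^-1).\<close>
fun conj_gen :: "aut \<Rightarrow> gen" where
  "conj_gen Sig = X" | "conj_gen SigInv = X" | "conj_gen Tau = Y" | "conj_gen TauInv = Y"

fun other_gen :: "aut \<Rightarrow> gen" where
  "other_gen Sig = Y" | "other_gen SigInv = Y" | "other_gen Tau = X" | "other_gen TauInv = X"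

text \<open>The boundary i lies inside a cyclic subword g1 g2^r g1^-1 (r \<noteq> 0) of u:
  trivial cancellation.\<close>
definition trivial_at :: "aut \<Rightarrow> word \<Rightarrow> nat \<Rightarrow> bool" where
  "trivial_at \<alpha> u i \<longleftrightarrow> (let n = length u in
     \<exists>s r e. 1 \<le> r \<and> r + 2 \<le> n \<and>
       u ! (s mod n) = (conj_gen \<alpha>, True) \<and>
       u ! ((s + r + 1) mod n) = (conj_gen \<alpha>, False) \<and>
       (\<forall>j\<in>{1..r}. u ! ((s + j) mod n) = (other_gen \<alpha>, e)) \<and>
       (\<exists>j\<le>r. i = (s + j) mod n))"

definition proper_cancellation :: "aut \<Rightarrow> word \<Rightarrow> bool" where
  "proper_cancellation \<alpha> u \<longleftrightarrow>
     (\<exists>i < length u. cancel_at \<alpha> u i \<and> \<not> trivial_at \<alpha> u i)"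

end

(*
  Let alpha be one of sigma, tau or their inverses, g the generator it moves (x resp. y) and h the
  other generator. Call a letter h^e of a cyclic word bad for alpha if its nearest g-letters on both
  sides are g^S and g^S with the same sign S, namely the sign for which alpha cancels properly
  across g^S h^e (the h-letters of x y^-r x and of x^-1 y^r x^-1 for sigma). Away from bad letters
  every cancellation is trivial: the cancelling run of h is enclosed as g h^r g^-1. There are at
  most ||w|| bad letters; applying alpha removes at least one of them, since every run g^S h^r g^S
  loses one h, and applying the other transvection of the same sign creates none. Hence after
  ||w|| factors alpha of the chain no bad letter, and so no proper cancellation, is left.

  To compute the action of alpha, a cyclic word containing g is cut into blocks g^(s_i) h^(b_i);
  on the exponents b_i the transvection acts by an explicit local rule.
*)

theory Submission
  imports Defs
begin

lemma rotate_conv_nth_Cons: "m < length v \<Longrightarrow> rotate m v = v ! m # drop (Suc m) v @ take m v"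
  by (simp add: rotate_drop_take Cons_nth_drop_Suc)

lemma rotate_Cons_nth:
  assumes "i < length K"
  obtains K' where "rotate i K = K ! i # K'" and "hd (K' @ [K ! i]) = rotate1 K ! i"
proof -
  obtain y K' where rot: "rotate i K = y # K'"
    using assms by (cases "rotate i K") auto
  have "y = K ! i"
    using nth_rotate[of 0 K i] assms rot by (cases K) auto
  moreover have "hd (K' @ [y]) = rotate i (rotate1 K) ! 0"
    using rot by (simp add: hd_conv_nth flip: rotate1_rotate_swap)
  moreover have "rotate i (rotate1 K) ! 0 = rotate1 K ! i"
    using nth_rotate[of 0 "rotate1 K" i] assms by (cases K) auto
  ultimately show thesis
    using rot that by simp
qed

lemma rotate_nth_Cons_Cons:
  assumes "i < length u" "1 < length u"
  obtains ys where "rotate i u = u ! i # u ! (Suc i mod length u) # ys"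
proof -
  have "rotate i u ! 0 = u ! i" and "rotate i u ! 1 = u ! (Suc i mod length u)"
    using assms nth_rotate[of 0 u i] nth_rotate[of 1 u i] by (cases u; simp)+
  moreover obtain a b ys where "rotate i u = a # b # ys"
    using assms(2) length_rotate[of i u] by (cases "rotate i u" rule: remdups_adj.cases) auto
  ultimately show thesis
    using that by simp
qed

lemma concat_rotate:
  "i < length L \<Longrightarrow> concat (rotate i L) = rotate (length (concat (take i L))) (concat L)"
  by (metis append_take_drop_id concat_append rotate_append rotate_drop_take mod_less)

lemma filter_eq_snocD: "filter P ys = xs @ [x] \<Longrightarrow> \<exists>us vs. ys = us @ x # vs \<and> (\<forall>v\<in>set vs. \<not> P v)"
proof -
  assume "filter P ys = xs @ [x]"
  then have "filter P (rev ys) = x # rev xs"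
    by (simp add: rev_filter[symmetric])
  then obtain us vs where "rev ys = us @ x # vs" and "\<forall>u\<in>set us. \<not> P u"
    by (auto dest: filter_eq_ConsD)
  then show ?thesis
    by (intro exI[of _ "rev vs"] exI[of _ "rev us"]) (simp add: rev_swap)
qed

lemma sum_lessThan_add: "(\<Sum>j<a + b. f j) = (\<Sum>j<a. f j) + (\<Sum>m<b. f (a + m))"
  for f :: "nat \<Rightarrow> 'a::comm_monoid_add"
  by (induction b) (simp_all add: add.assoc)

lemma sum_concat_index:
  "(\<Sum>j<length (concat L). f j) =
     (\<Sum>i<length L. \<Sum>m<length (L ! i). f (length (concat (take i L)) + m))"
  for f :: "nat \<Rightarrow> 'a::comm_monoid_add"
proof (induction L rule: rev_induct)
  case (snoc xs L)
  have "(\<Sum>j<length (concat (L @ [xs])). f j) =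
      (\<Sum>j<length (concat L). f j) + (\<Sum>m<length xs. f (length (concat L) + m))"
    by (simp add: sum_lessThan_add)
  also have "(\<Sum>j<length (concat L). f j) =
      (\<Sum>i<length L. \<Sum>m<length ((L @ [xs]) ! i). f (length (concat (take i (L @ [xs]))) + m))"
    unfolding snoc.IH by (intro sum.cong) (auto simp: nth_append)
  finally show ?case
    by simp
qed simp

lemma sum_rotate_concat:
  "(\<Sum>j<length (concat L). f (rotate j (concat L))) =
     (\<Sum>i<length L. \<Sum>m<length (L ! i). f (rotate m (concat (rotate i L))))"
  for f :: "'a list \<Rightarrow> 'b::comm_monoid_add"
proof -
  have "rotate (length (concat (take i L)) + m) (concat L) = rotate m (concat (rotate i L))"
    if "i < length L" for i m
    using concat_rotate[OF that] by (simp add: rotate_rotate add.commute)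
  then show ?thesis
    unfolding sum_concat_index by (auto intro!: sum.cong)
qed

lemma sum_le_diff_one:
  fixes f g :: "'a \<Rightarrow> nat"
  assumes "finite A" and "\<And>i. i \<in> A \<Longrightarrow> f i \<le> g i" and "\<And>i. i \<in> A \<Longrightarrow> 0 < g i \<Longrightarrow> f i < g i"
  shows "sum f A \<le> sum g A - 1"
proof (cases "\<exists>i\<in>A. 0 < g i")
  case True
  then have "sum f A < sum g A"
    using assms by (meson sum_strict_mono_ex1)
  then show ?thesis
    by simp
next
  case False
  then have "sum f A = 0"
    using assms(2) by (simp add: sum_eq_0_iff[OF assms(1)])
  then show ?thesis
    by simp
qed

section \<open>Free and cyclic reduction\<close>

lemma inv_letter_inv_letter [simp]: "inv_letter (inv_letter a) = a"
  by (simp add: inv_letter_def)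

lemma inv_letter_neq [simp]: "inv_letter a \<noteq> a" "a \<noteq> inv_letter a"
  by (simp_all add: inv_letter_def prod_eq_iff)

lemma inv_letter_Pair [simp]: "inv_letter (g, s) = (g, \<not> s)"
  by (simp add: inv_letter_def)

lemma freely_reduced_Nil [simp]: "freely_reduced []"
  by (simp add: freely_reduced_def)

lemma freely_reduced_Cons:
  "freely_reduced (a # w) \<longleftrightarrow> (w = [] \<or> hd w \<noteq> inv_letter a) \<and> freely_reduced w"
  by (cases w) (auto simp: freely_reduced_def nth_Cons split: nat.split)

lemma freely_reduced_singleton [simp]: "freely_reduced [a]"
  by (simp add: freely_reduced_Cons)

lemma freely_reduced_append:
  "freely_reduced (xs @ ys) \<longleftrightarrow> freely_reduced xs \<and> freely_reduced ys \<and>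
     (xs = [] \<or> ys = [] \<or> hd ys \<noteq> inv_letter (last xs))"
  by (induction xs) (auto simp: freely_reduced_Cons)

lemma freely_reduced_infix: "freely_reduced (xs @ ys @ zs) \<Longrightarrow> freely_reduced ys"
  by (simp add: freely_reduced_append)

lemma freely_reduced_replicate_hd:
  assumes "freely_reduced xs" and "\<forall>x\<in>set xs. fst x = h"
  shows "xs = replicate (length xs) (hd xs)"
  using assms
proof (induction xs)
  case (Cons x xs)
  show ?case
  proof (cases xs)
    case (Cons y ys)
    obtain s t where "x = (h, s)" "y = (h, t)"
      using Cons.prems(2) \<open>xs = y # ys\<close> by (cases x, cases y) auto
    moreover have "y \<noteq> inv_letter x"
      using Cons.prems(1) \<open>xs = y # ys\<close> by (simp add: freely_reduced_Cons)
    ultimately have "y = x"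
      by auto
    with Cons.IH Cons.prems \<open>xs = y # ys\<close> show ?thesis
      by (simp add: freely_reduced_Cons)
  qed simp
qed simp

definition reduce_cons :: "letter \<Rightarrow> word \<Rightarrow> word" where
  "reduce_cons a v = (case v of [] \<Rightarrow> [a] | b # r \<Rightarrow> if b = inv_letter a then r else a # v)"

lemma free_reduce_Nil [simp]: "free_reduce [] = []"
  by (simp add: free_reduce_def)

lemma free_reduce_Cons: "free_reduce (a # w) = reduce_cons a (free_reduce w)"
  by (simp add: free_reduce_def reduce_cons_def)

lemma freely_reduced_free_reduce: "freely_reduced (free_reduce w)"
proof (induction w)
  case (Cons a w)
  then show ?case
    by (auto simp: free_reduce_Cons reduce_cons_def freely_reduced_Cons split: list.split)
qed simp

lemma free_reduce_id: "freely_reduced w \<Longrightarrow> free_reduce w = w"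
  by (induction w) (auto simp: free_reduce_Cons freely_reduced_Cons reduce_cons_def split: list.split)

lemma reduce_cons_cancel:
  assumes "freely_reduced v"
  shows "reduce_cons (g, s) (reduce_cons (g, \<not> s) v) = v"
proof (cases v)
  case (Cons b r)
  with assms show ?thesis
    by (cases r) (auto simp: reduce_cons_def freely_reduced_Cons)
qed (simp add: reduce_cons_def)

lemma free_reduce_cancel: "free_reduce (xs @ (g, s) # (g, \<not> s) # ys) = free_reduce (xs @ ys)"
  by (induction xs) (simp_all add: free_reduce_Cons reduce_cons_cancel freely_reduced_free_reduce)

declare cyc_strip.simps [simp del]

lemma cyc_strip_cancel: "cyc_strip (a # w @ [inv_letter a]) = cyc_strip w"
  by (subst cyc_strip.simps) simp

lemma cyc_strip_id: "cyc_reduced w \<Longrightarrow> cyc_strip w = w"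
  by (subst cyc_strip.simps) (auto simp: cyc_reduced_def)

lemma cyc_reduced_cyc_strip: "freely_reduced w \<Longrightarrow> cyc_reduced (cyc_strip w)"
proof (induction w rule: cyc_strip.induct)
  case (1 w)
  show ?case
  proof (cases "2 \<le> length w \<and> last w = inv_letter (hd w)")
    case True
    then obtain a r where "w = a # r" and "r \<noteq> []"
      by (cases w) (auto simp: Suc_le_eq)
    then obtain v b where "w = a # v @ [b]"
      by (cases r rule: rev_cases) auto
    with "1.prems" have "freely_reduced (butlast (tl w))"
      by (simp add: freely_reduced_Cons freely_reduced_append)
    with True "1.IH" show ?thesis
      by (subst cyc_strip.simps) simp
  next
    case False
    with "1.prems" show ?thesis
      by (subst cyc_strip.simps) (auto simp: cyc_reduced_def)
  qed
qed

lemma cyc_reduced_apply_aut: "cyc_reduced (apply_aut \<alpha> w)"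
  by (simp add: apply_aut_def cyc_reduce_def cyc_reduced_cyc_strip freely_reduced_free_reduce)

lemma cyc_reduced_rotate1:
  assumes "cyc_reduced u"
  shows "cyc_reduced (rotate1 u)"
proof (cases u)
  case (Cons a w)
  show ?thesis
  proof (cases "w = []")
    case False
    have "freely_reduced (a # w)" and "last w \<noteq> inv_letter a"
      using assms Cons False by (auto simp: cyc_reduced_def Suc_le_eq)
    then have "freely_reduced w" "a \<noteq> inv_letter (last w)" "a \<noteq> inv_letter (hd w)"
      using False by (auto simp: freely_reduced_Cons)
    with Cons False show ?thesis
      by (simp add: cyc_reduced_def freely_reduced_append)
  qed (use assms Cons in simp)
qed (simp add: cyc_reduced_def)

lemma cyc_reduced_rotate: "cyc_reduced u \<Longrightarrow> cyc_reduced (rotate q u)"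
  by (induction q) (simp_all add: cyc_reduced_rotate1)

lemma cyc_reduced_nth_Suc_mod:
  assumes "cyc_reduced u" and "i < length u"
  shows "u ! (Suc i mod length u) \<noteq> inv_letter (u ! i)"
proof (cases "length u = 1")
  case False
  with assms(2) have "1 < length u"
    by linarith
  then obtain ys where "rotate i u = u ! i # u ! (Suc i mod length u) # ys"
    using rotate_nth_Cons_Cons[OF assms(2)] by blast
  with cyc_reduced_rotate[OF assms(1), of i] show ?thesis
    by (simp add: cyc_reduced_def freely_reduced_Cons)
qed (use assms(2) in simp)

lemma cyc_reduced_run_Cons:
  assumes "cyc_reduced u" and "rotate q u = xs @ (a # ys) @ zs" and "\<forall>y\<in>set ys. fst y = fst a"
  shows "a # ys = replicate (Suc (length ys)) a"
proof -
  have "freely_reduced (xs @ (a # ys) @ zs)"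
    using cyc_reduced_rotate[OF assms(1), of q] assms(2) by (simp add: cyc_reduced_def)
  then have "freely_reduced (a # ys)"
    by (rule freely_reduced_infix)
  with assms(3) show ?thesis
    using freely_reduced_replicate_hd[of "a # ys" "fst a"] by auto
qed

lemma cyc_reduced_run_snoc:
  assumes "cyc_reduced u" and "rotate q u = xs @ (ys @ [a]) @ zs" and "\<forall>y\<in>set ys. fst y = fst a"
  shows "ys @ [a] = replicate (Suc (length ys)) a"
proof -
  have "freely_reduced (xs @ (ys @ [a]) @ zs)"
    using cyc_reduced_rotate[OF assms(1), of q] assms(2) by (simp add: cyc_reduced_def)
  then have "freely_reduced (ys @ [a])"
    by (rule freely_reduced_infix)
  with assms(3) have run: "ys @ [a] = replicate (Suc (length ys)) (hd (ys @ [a]))"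
    using freely_reduced_replicate_hd[of "ys @ [a]" "fst a"] by auto
  from arg_cong[OF this, of last] have "hd (ys @ [a]) = a"
    by (simp del: replicate_Suc add: last_replicate)
  with run show ?thesis
    by simp
qed

section \<open>Powers of a generator and block words\<close>

fun other :: "gen \<Rightarrow> gen" where
  "other X = Y"
| "other Y = X"

lemma other_neq [simp]: "other g \<noteq> g" "g \<noteq> other g"
  by (cases g; simp)+

lemma other_other [simp]: "other (other g) = g"
  by (cases g) simp_all

lemma neq_imp_eq_other: "a \<noteq> g \<Longrightarrow> a = other g"
  by (cases a; cases g) simp_all

definition gpow :: "gen \<Rightarrow> int \<Rightarrow> word" where
  "gpow h c = replicate (nat \<bar>c\<bar>) (h, 0 < c)"

lemma gpow_0 [simp]: "gpow h 0 = []"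
  by (simp add: gpow_def)

lemma gpow_eq_Nil_iff [simp]: "gpow h c = [] \<longleftrightarrow> c = 0"
  by (auto simp: gpow_def)

lemma length_gpow [simp]: "length (gpow h c) = nat \<bar>c\<bar>"
  by (simp add: gpow_def)

lemma hd_gpow: "c \<noteq> 0 \<Longrightarrow> hd (gpow h c) = (h, 0 < c)"
  by (simp add: gpow_def hd_replicate)

lemma last_gpow: "c \<noteq> 0 \<Longrightarrow> last (gpow h c) = (h, 0 < c)"
  by (simp add: gpow_def last_replicate)

lemma freely_reduced_gpow: "freely_reduced (gpow h c)"
  by (simp add: freely_reduced_def gpow_def)

lemma gpow_Cons_sgn:
  assumes "c \<noteq> 0"
  shows "gpow h c = (h, 0 < c) # gpow h (c - sgn c)"
proof (cases "\<bar>c\<bar> = 1")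
  case True
  then have "c - sgn c = 0" and "nat \<bar>c\<bar> = 1"
    by (auto simp: sgn_if abs_if split: if_splits)
  then show ?thesis
    by (simp add: gpow_def)
next
  case False
  with assms have "nat \<bar>c\<bar> = Suc (nat \<bar>c - sgn c\<bar>)" and "(0 < c - sgn c) = (0 < c)"
    by (auto simp: sgn_if)
  then show ?thesis
    by (simp add: gpow_def)
qed

lemma gpow_snoc_sgn:
  assumes "c \<noteq> 0"
  shows "gpow h c = gpow h (c - sgn c) @ [(h, 0 < c)]"
proof (cases "\<bar>c\<bar> = 1")
  case True
  then have "c - sgn c = 0" and "nat \<bar>c\<bar> = 1"
    by (auto simp: sgn_if abs_if split: if_splits)
  then show ?thesis
    by (simp add: gpow_def)
next
  case False
  with assms have "nat \<bar>c\<bar> = Suc (nat \<bar>c - sgn c\<bar>)" and "(0 < c - sgn c) = (0 < c)"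
    by (auto simp: sgn_if)
  then show ?thesis
    by (simp add: gpow_def replicate_append_same)
qed

lemma gpow_append: "0 \<le> a * b \<Longrightarrow> gpow h a @ gpow h b = gpow h (a + b)"
  unfolding gpow_def
  by (cases "a = 0"; cases "b = 0") (auto simp: zero_le_mult_iff nat_add_distrib replicate_add[symmetric])

lemma gpow_of_uniform:
  assumes "freely_reduced xs" and "\<forall>x\<in>set xs. fst x = h"
  shows "\<exists>c. xs = gpow h c"
proof (cases xs)
  case (Cons x ys)
  then obtain s where "hd xs = (h, s)"
    using assms(2) by (cases x) auto
  moreover have "xs = replicate (length xs) (hd xs)"
    using freely_reduced_replicate_hd[OF assms] .
  moreover have "replicate n (h, s) = gpow h (if s then int n else - int n)" for n
    by (cases "n = 0") (auto simp: gpow_def)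
  ultimately show ?thesis
    by metis
qed (simp add: exI[of _ 0])

lemma free_reduce_gpow_append:
  "free_reduce (xs @ gpow h a @ gpow h b @ ys) = free_reduce (xs @ gpow h (a + b) @ ys)"
proof (induction "nat \<bar>a\<bar>" arbitrary: a b)
  case 0
  then show ?case
    by simp
next
  case (Suc n)
  show ?case
  proof (cases "0 \<le> a * b")
    case True
    then show ?thesis
      by (metis append_assoc gpow_append)
  next
    case False
    then have "a \<noteq> 0" "b \<noteq> 0" "sgn b = - sgn a" "(0 < b) = (\<not> 0 < a)"
      by (auto simp: zero_le_mult_iff sgn_if)
    then have "xs @ gpow h a @ gpow h b @ ys =
        (xs @ gpow h (a - sgn a)) @ (h, 0 < a) # (h, \<not> 0 < a) # gpow h (b + sgn a) @ ys"
      using gpow_snoc_sgn[of a h] gpow_Cons_sgn[of b h] by simp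
    then have "free_reduce (xs @ gpow h a @ gpow h b @ ys) =
        free_reduce (xs @ gpow h (a - sgn a) @ gpow h (b + sgn a) @ ys)"
      by (simp only: free_reduce_cancel) simp
    also have "\<dots> = free_reduce (xs @ gpow h (a + b) @ ys)"
      using Suc.hyps \<open>a \<noteq> 0\<close> by (simp add: sgn_if)
    finally show ?thesis .
  qed
qed

lemma cyc_strip_gpow_same_sign:
  assumes "Z \<noteq> []" "fst (hd Z) \<noteq> h" "fst (last Z) \<noteq> h" "0 \<le> a * b"
    and "a + b \<noteq> 0 \<or> last Z \<noteq> inv_letter (hd Z)"
  shows "cyc_strip (gpow h a @ Z @ gpow h b) = gpow h a @ Z @ gpow h b"
  using assms
  by (subst cyc_strip.simps)
    (auto simp: hd_gpow last_gpow zero_le_mult_iff inv_letter_def hd_append last_append)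

lemma cyc_strip_gpow:
  assumes "Z \<noteq> []" "fst (hd Z) \<noteq> h" "fst (last Z) \<noteq> h"
    and "a + b \<noteq> 0 \<or> last Z \<noteq> inv_letter (hd Z)"
  shows "\<exists>a' b'. cyc_strip (gpow h a @ Z @ gpow h b) = gpow h a' @ Z @ gpow h b' \<and>
    a' + b' = a + b \<and> 0 \<le> a' * b'"
  using assms(4)
proof (induction "nat \<bar>a\<bar>" arbitrary: a b)
  case 0
  then have "a = 0"
    by simp
  then show ?case
    using cyc_strip_gpow_same_sign[OF assms(1-3), of a b] "0.prems"
    by (intro exI[of _ a] exI[of _ b]) simp
next
  case (Suc n)
  show ?case
  proof (cases "0 \<le> a * b")
    case True
    then show ?thesis
      using Suc.prems cyc_strip_gpow_same_sign[OF assms(1-3)] by blast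
  next
    case False
    then have "a \<noteq> 0" "b \<noteq> 0" "sgn b = - sgn a" "(0 < b) = (\<not> 0 < a)"
      by (auto simp: zero_le_mult_iff sgn_if)
    then have "gpow h a @ Z @ gpow h b =
        (h, 0 < a) # (gpow h (a - sgn a) @ Z @ gpow h (b + sgn a)) @ [inv_letter (h, 0 < a)]"
      using gpow_Cons_sgn[of a h] gpow_snoc_sgn[of b h] by simp
    then have "cyc_strip (gpow h a @ Z @ gpow h b) = cyc_strip (gpow h (a - sgn a) @ Z @ gpow h (b + sgn a))"
      by (simp only: cyc_strip_cancel)
    moreover have "n = nat \<bar>a - sgn a\<bar>" "a - sgn a + (b + sgn a) = a + b"
      using Suc.hyps \<open>a \<noteq> 0\<close> by (auto simp: sgn_if)
    ultimately show ?thesis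
      using Suc.hyps(1)[of "a - sgn a" "b + sgn a"] Suc.prems by auto
  qed
qed

(* blocks g [(s_1, b_1), ..., (s_t, b_t)] is the word g^s_1 h^b_1 ... g^s_t h^b_t with h = other g,
   where s_i = True stands for the exponent 1. *)
definition blocks :: "gen \<Rightarrow> (bool \<times> int) list \<Rightarrow> word" where
  "blocks g K = concat (map (\<lambda>(s, b). (g, s) # gpow (other g) b) K)"

lemma blocks_Nil [simp]: "blocks g [] = []"
  by (simp add: blocks_def)

lemma blocks_Cons [simp]: "blocks g ((s, b) # K) = (g, s) # gpow (other g) b @ blocks g K"
  by (simp add: blocks_def)

lemma blocks_append: "blocks g (K @ L) = blocks g K @ blocks g L"
  by (simp add: blocks_def)

lemma blocks_eq_Nil_iff [simp]: "blocks g K = [] \<longleftrightarrow> K = []"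
  by (cases K) auto

lemma hd_blocks: "K \<noteq> [] \<Longrightarrow> hd (blocks g K) = (g, fst (hd K))"
  by (cases K) auto

lemma blocks_snoc: "blocks g (K @ [(s, b)]) = blocks g K @ (g, s) # gpow (other g) b"
  by (simp add: blocks_append)

lemma last_blocks:
  assumes "K \<noteq> []"
  shows "last (blocks g K) =
    (if snd (last K) = 0 then (g, fst (last K)) else (other g, 0 < snd (last K)))"
proof -
  obtain L s b where "K = L @ [(s, b)]"
    using assms by (metis prod.exhaust rev_exhaust)
  then show ?thesis
    by (simp add: blocks_snoc last_gpow)
qed

lemma blocks_rotate:
  "i < length K \<Longrightarrow> blocks g (rotate i K) = rotate (length (blocks g (take i K))) (blocks g K)"
  using concat_rotate[of i "map (\<lambda>(s, b). (g, s) # gpow (other g) b) K"]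
  by (simp add: blocks_def rotate_map take_map)

lemma nth_blocks_Cons:
  "0 < m \<Longrightarrow> m \<le> nat \<bar>b\<bar> \<Longrightarrow> blocks g ((s, b) # K) ! m = (other g, 0 < b)"
  by (cases m) (simp_all add: nth_append gpow_def)

lemma freely_reduced_blocks:
  assumes "\<forall>i. Suc i < length K \<longrightarrow> snd (K ! i) = 0 \<longrightarrow> fst (K ! i) = fst (K ! Suc i)"
  shows "freely_reduced (blocks g K)"
  using assms
proof (induction K)
  case (Cons x K)
  obtain s b where x: "x = (s, b)"
    by (cases x)
  have "freely_reduced (blocks g K)"
    using Cons by (intro Cons.IH) auto
  then have "freely_reduced (gpow (other g) b @ blocks g K)"
    by (cases "K = []"; cases "b = 0")
      (simp_all add: freely_reduced_append freely_reduced_gpow hd_blocks last_gpow)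
  moreover have "K \<noteq> [] \<Longrightarrow> b = 0 \<Longrightarrow> fst (hd K) = s"
    using Cons.prems x by (auto simp: hd_conv_nth)
  then have "gpow (other g) b @ blocks g K = [] \<or> hd (gpow (other g) b @ blocks g K) \<noteq> (g, \<not> s)"
    by (cases "b = 0"; cases "K = []") (simp_all add: hd_blocks hd_gpow)
  ultimately show ?case
    using x by (simp add: freely_reduced_Cons)
qed simp

lemma blocks_of_freely_reduced:
  "freely_reduced v \<Longrightarrow> (v \<noteq> [] \<Longrightarrow> fst (hd v) = g) \<Longrightarrow> \<exists>G. v = blocks g G"
proof (induction "length v" arbitrary: v rule: less_induct)
  case less
  show ?case
  proof (cases v)
    case (Cons x rest)
    obtain s where x: "x = (g, s)"
      using less.prems(2) Cons by (cases x) auto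
    define ys where "ys = takeWhile (\<lambda>y. fst y \<noteq> g) rest"
    define zs where "zs = dropWhile (\<lambda>y. fst y \<noteq> g) rest"
    have rest: "rest = ys @ zs" and "freely_reduced rest"
      using less.prems(1) Cons by (simp_all add: ys_def zs_def freely_reduced_Cons)
    then have "freely_reduced ys" and "freely_reduced zs"
      by (simp_all add: freely_reduced_append)
    moreover have "\<forall>y\<in>set ys. fst y = other g"
      by (auto simp: ys_def neq_imp_eq_other dest: set_takeWhileD)
    ultimately obtain b where "ys = gpow (other g) b"
      using gpow_of_uniform by blast
    moreover have "zs \<noteq> [] \<Longrightarrow> fst (hd zs) = g"
      unfolding zs_def by (metis (mono_tags, lifting) hd_dropWhile)
    moreover have "length zs < length v"
      using Cons rest by simp
    ultimately obtain G where "zs = blocks g G"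
      using less.hyps \<open>freely_reduced zs\<close> by blast
    with \<open>ys = gpow (other g) b\<close> show ?thesis
      using Cons x rest by (intro exI[of _ "(s, b) # G"]) simp
  qed (simp add: exI[of _ "[]"])
qed

definition add_last :: "(bool \<times> int) list \<Rightarrow> int \<Rightarrow> (bool \<times> int) list" where
  "add_last K c = butlast K @ [(fst (last K), snd (last K) + c)]"

lemma add_last_not_Nil [simp]: "add_last K c \<noteq> []"
  by (simp add: add_last_def)

lemma length_add_last [simp]: "K \<noteq> [] \<Longrightarrow> length (add_last K c) = length K"
  by (simp add: add_last_def)

lemma nth_add_last:
  assumes "i < length K"
  shows "add_last K c ! i = (if Suc i = length K then (fst (K ! i), snd (K ! i) + c) else K ! i)"
proof (cases "Suc i = length K")
  case True
  then have "last K = K ! i"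
    by (metis diff_Suc_1 last_conv_nth list.size(3) nat.distinct(1))
  moreover from True have "length K = Suc i"
    by simp
  ultimately show ?thesis
    by (simp add: add_last_def nth_append)
qed (use assms in \<open>auto simp: add_last_def nth_append nth_butlast\<close>)

lemma fst_nth_add_last [simp]: "i < length K \<Longrightarrow> fst (add_last K c ! i) = fst (K ! i)"
  by (simp add: nth_add_last)

lemma add_last_add: "add_last (add_last K a) b = add_last K (a + b)"
  by (simp add: add_last_def add.assoc)

lemma add_last_0: "K \<noteq> [] \<Longrightarrow> add_last K 0 = K"
  by (simp add: add_last_def)

lemma blocks_add_last:
  "K \<noteq> [] \<Longrightarrow> blocks g (add_last K c) =
     blocks g (butlast K) @ (g, fst (last K)) # gpow (other g) (snd (last K) + c)"
  by (simp add: add_last_def blocks_snoc)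

lemma blocks_append_gpow:
  assumes "K \<noteq> []" "0 \<le> c * snd (last K)"
  shows "blocks g K @ gpow (other g) c = blocks g (add_last K c)"
proof -
  have "blocks g K = blocks g (butlast K) @ (g, fst (last K)) # gpow (other g) (snd (last K))"
    using blocks_add_last[OF assms(1), of g 0] assms(1) by (simp add: add_last_0)
  with assms show ?thesis
    by (simp add: blocks_add_last gpow_append mult.commute)
qed

definition cyc_reduced_blocks :: "(bool \<times> int) list \<Rightarrow> bool" where
  "cyc_reduced_blocks K \<longleftrightarrow> (\<forall>i < length K. snd (K ! i) = 0 \<longrightarrow> fst (K ! i) = fst (rotate1 K ! i))"

lemma freely_reduced_blocks_add_last:
  assumes "cyc_reduced_blocks K"
  shows "freely_reduced (blocks g (add_last K c))"
proof (rule freely_reduced_blocks, intro allI impI)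
  fix i
  assume i: "Suc i < length (add_last K c)" and zero: "snd (add_last K c ! i) = 0"
  then have "K \<noteq> []"
    by (auto simp: add_last_def)
  with i have "Suc i < length K"
    by simp
  with zero have "snd (K ! i) = 0"
    by (simp add: nth_add_last)
  with assms \<open>Suc i < length K\<close> show "fst (add_last K c ! i) = fst (add_last K c ! Suc i)"
    by (simp add: cyc_reduced_blocks_def nth_rotate1)
qed

lemma cyc_reduced_blocks_rotate:
  assumes "cyc_reduced_blocks K"
  shows "cyc_reduced_blocks (rotate i K)"
  unfolding cyc_reduced_blocks_def
proof (intro allI impI)
  fix j
  assume "j < length (rotate i K)" and zero: "snd (rotate i K ! j) = 0"
  then have "j < length K" and "(i + j) mod length K < length K"
    by (cases K; simp)+
  with assms zero show "fst (rotate i K ! j) = fst (rotate1 (rotate i K) ! j)"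
    by (simp add: cyc_reduced_blocks_def nth_rotate rotate1_rotate_swap)
qed

lemma cyc_reduced_blocks_of_cyc_reduced:
  assumes "cyc_reduced (blocks g K)"
  shows "cyc_reduced_blocks K"
  unfolding cyc_reduced_blocks_def
proof (intro allI impI)
  fix i
  assume i: "i < length K" and zero: "snd (K ! i) = 0"
  obtain K' where rot: "rotate i K = K ! i # K'" and next_head: "hd (K' @ [K ! i]) = rotate1 K ! i"
    using rotate_Cons_nth[OF i] by blast
  obtain s where Ki: "K ! i = (s, 0)"
    using zero by (cases "K ! i") auto
  have "cyc_reduced (blocks g (rotate i K))"
    using blocks_rotate[OF i] cyc_reduced_rotate[OF assms] by simp
  then have "freely_reduced ((g, s) # blocks g K')"
    using rot Ki by (simp add: cyc_reduced_def)
  then have "K' \<noteq> [] \<Longrightarrow> fst (hd K') = s"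
    by (cases K') (auto simp: freely_reduced_Cons)
  then show "fst (K ! i) = fst (rotate1 K ! i)"
    using next_head Ki by (cases K') auto
qed

(* u is the cyclic word blocks g K, cut open inside the power of other g that ends it. *)
definition block_form :: "gen \<Rightarrow> (bool \<times> int) list \<Rightarrow> word \<Rightarrow> bool" where
  "block_form g K u \<longleftrightarrow> (\<exists>c G. u = gpow (other g) c @ blocks g G \<and> G \<noteq> [] \<and>
     0 \<le> c * snd (last G) \<and> add_last G c = K)"

lemma block_form_rotate: "block_form g K u \<Longrightarrow> \<exists>q. rotate q u = blocks g K"
  by (metis block_form_def blocks_append_gpow rotate_append)

lemma block_form_exists:
  assumes "cyc_reduced u" and "\<exists>x\<in>set u. fst x = g"
  shows "\<exists>K. block_form g K u"
proof -
  define ys where "ys = takeWhile (\<lambda>y. fst y \<noteq> g) u"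
  define zs where "zs = dropWhile (\<lambda>y. fst y \<noteq> g) u"
  have u: "u = ys @ zs" and "freely_reduced u"
    using assms(1) by (simp_all add: ys_def zs_def cyc_reduced_def)
  then have "freely_reduced ys" and "freely_reduced zs"
    by (simp_all add: freely_reduced_append)
  moreover have "\<forall>y\<in>set ys. fst y = other g"
    by (auto simp: ys_def neq_imp_eq_other dest: set_takeWhileD)
  ultimately obtain c where c: "ys = gpow (other g) c"
    using gpow_of_uniform by blast
  have "zs \<noteq> []"
    using assms(2) by (auto simp: zs_def dropWhile_eq_Nil_conv)
  moreover have "fst (hd zs) = g"
    using \<open>zs \<noteq> []\<close> unfolding zs_def by (metis (mono_tags, lifting) hd_dropWhile)
  ultimately obtain G where G: "zs = blocks g G" and "G \<noteq> []"
    using blocks_of_freely_reduced[OF \<open>freely_reduced zs\<close>] by fastforce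
  have "0 \<le> c * snd (last G)"
  proof (rule ccontr)
    assume opposite: "\<not> 0 \<le> c * snd (last G)"
    then have "hd u = (other g, 0 < c)" and "last u = (other g, 0 < snd (last G))" and "ys \<noteq> []"
      using u c G \<open>G \<noteq> []\<close> by (auto simp: hd_gpow last_blocks zero_le_mult_iff)
    moreover have "2 \<le> length u"
      using u \<open>ys \<noteq> []\<close> \<open>zs \<noteq> []\<close> by (cases ys; cases zs) auto
    ultimately show False
      using assms(1) opposite
      by (auto simp: cyc_reduced_def zero_le_mult_iff)
  qed
  with u c G \<open>G \<noteq> []\<close> show ?thesis
    by (auto simp: block_form_def)
qed

lemma cyc_reduced_blocks_of_block_form:
  "block_form g K u \<Longrightarrow> cyc_reduced u \<Longrightarrow> cyc_reduced_blocks K"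
  by (metis block_form_rotate cyc_reduced_blocks_of_cyc_reduced cyc_reduced_rotate)

lemma cyc_strip_block_form:
  assumes "K \<noteq> []" "cyc_reduced_blocks K"
  shows "block_form g K (cyc_strip (gpow (other g) a @ blocks g (add_last K (- a))))"
proof -
  define Z where "Z = blocks g (butlast K) @ [(g, fst (last K))]"
  have word: "gpow (other g) a @ blocks g (add_last K (- a)) =
      gpow (other g) a @ Z @ gpow (other g) (snd (last K) - a)"
    using assms(1) by (simp add: Z_def blocks_add_last)
  have hd_Z: "hd Z = (g, fst (hd K))"
    using assms(1) by (cases K rule: rev_cases) (auto simp: Z_def hd_blocks hd_append)
  have "snd (last K) = 0 \<Longrightarrow> fst (last K) = fst (hd K)"
    using assms by (auto simp: cyc_reduced_blocks_def last_conv_nth hd_conv_nth nth_rotate1)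
  then have "a + (snd (last K) - a) \<noteq> 0 \<or> last Z \<noteq> inv_letter (hd Z)"
    using hd_Z by (auto simp: Z_def)
  then obtain a' b' where strip: "cyc_strip (gpow (other g) a @ Z @ gpow (other g) (snd (last K) - a)) =
      gpow (other g) a' @ Z @ gpow (other g) b'" and "a' + b' = snd (last K)" and "0 \<le> a' * b'"
    using cyc_strip_gpow[of Z "other g" a "snd (last K) - a"] hd_Z by (auto simp: Z_def)
  define G where "G = butlast K @ [(fst (last K), b')]"
  have "gpow (other g) a' @ Z @ gpow (other g) b' = gpow (other g) a' @ blocks g G"
    by (simp add: Z_def G_def blocks_snoc)
  moreover have "add_last G a' = K"
    using assms(1) \<open>a' + b' = snd (last K)\<close> by (simp add: G_def add_last_def add.commute)
  ultimately show ?thesis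
    unfolding block_form_def using word strip \<open>0 \<le> a' * b'\<close>
    by (intro exI[of _ a'] exI[of _ G]) (simp add: G_def mult.commute)
qed

section \<open>Transvections acting on block words\<close>

fun transvection :: "gen \<Rightarrow> bool \<Rightarrow> aut" where
  "transvection X True = Sig"
| "transvection X False = SigInv"
| "transvection Y True = Tau"
| "transvection Y False = TauInv"

lemma conj_gen_transvection [simp]: "conj_gen (transvection g p) = g"
  by (cases g; cases p) simp_all

lemma other_gen_transvection [simp]: "other_gen (transvection g p) = other g"
  by (cases g; cases p) simp_all

definition lead_exp :: "bool \<Rightarrow> bool \<Rightarrow> int" where
  "lead_exp p s = (if s then 0 else if p then -1 else 1)"

definition trail_exp :: "bool \<Rightarrow> bool \<Rightarrow> int" where
  "trail_exp p s = (if s then (if p then 1 else -1) else 0)"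

lemma trail_exp_lead_exp_cancel: "s \<noteq> s' \<Longrightarrow> trail_exp p s + lead_exp p s' = 0"
  by (cases s) (simp_all add: lead_exp_def trail_exp_def)

lemma img_transvection:
  "img (transvection g p) (a, s) =
     (if a = g then gpow (other g) (lead_exp p s) @ (g, s) # gpow (other g) (trail_exp p s) else [(a, s)])"
  by (cases g; cases p; cases a; cases s) (simp_all add: gpow_def lead_exp_def trail_exp_def)

lemma img_transvection_letters:
  "img (transvection g p) (g, True) = [(g, True), (other g, p)]"
  "img (transvection g p) (g, False) = [(other g, \<not> p), (g, False)]"
  "img (transvection g p) (other g, e) = [(other g, e)]"
  by (cases g; cases p; cases e; simp)+

lemma img_transvection_fixes: "fst x \<noteq> g \<Longrightarrow> img (transvection g p) x = [x]"
  by (cases x) (simp add: img_transvection)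

lemma img_transvection_gpow: "concat (map (img (transvection g p)) (gpow (other g) c)) = gpow (other g) c"
  by (simp add: gpow_def img_transvection)

(* After free reduction each power of other g absorbs the trailing power emitted by the image of
   the g-letter before it and the leading power emitted by the image of the g-letter after it
   (free_reduce_image_blocks); lin_step reads the block list as an open word, cyc_step cyclically. *)
fun lin_step :: "bool \<Rightarrow> (bool \<times> int) list \<Rightarrow> (bool \<times> int) list" where
  "lin_step p [] = []"
| "lin_step p [(s, b)] = [(s, b + trail_exp p s)]"
| "lin_step p ((s, b) # (s', b') # K) = (s, b + trail_exp p s + lead_exp p s') # lin_step p ((s', b') # K)"

lemma length_lin_step [simp]: "length (lin_step p K) = length K"
  by (induction p K rule: lin_step.induct) simp_all

lemma lin_step_eq_Nil_iff [simp]: "lin_step p K = [] \<longleftrightarrow> K = []"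
  by (metis length_0_conv length_lin_step)

lemma nth_lin_step:
  "i < length K \<Longrightarrow> lin_step p K ! i = (fst (K ! i), snd (K ! i) + trail_exp p (fst (K ! i)) +
     (if Suc i < length K then lead_exp p (fst (K ! Suc i)) else 0))"
proof (induction p K arbitrary: i rule: lin_step.induct)
  case (3 p s b s' b' K)
  then show ?case
    by (cases i) auto
qed simp_all

definition cyc_step :: "bool \<Rightarrow> (bool \<times> int) list \<Rightarrow> (bool \<times> int) list" where
  "cyc_step p K = map (\<lambda>i. (fst (K ! i),
     snd (K ! i) + trail_exp p (fst (K ! i)) + lead_exp p (fst (rotate1 K ! i)))) [0..<length K]"

lemma length_cyc_step [simp]: "length (cyc_step p K) = length K"
  by (simp add: cyc_step_def)

lemma nth_cyc_step:
  "i < length K \<Longrightarrow> cyc_step p K ! i =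
     (fst (K ! i), snd (K ! i) + trail_exp p (fst (K ! i)) + lead_exp p (fst (rotate1 K ! i)))"
  by (simp add: cyc_step_def)

lemma cyc_step_eq_Nil_iff [simp]: "cyc_step p K = [] \<longleftrightarrow> K = []"
  by (simp add: cyc_step_def)

lemma fst_nth_cyc_step [simp]: "i < length K \<Longrightarrow> fst (cyc_step p K ! i) = fst (K ! i)"
  by (simp add: nth_cyc_step)

lemma fst_nth_rotate1_cyc_step:
  assumes "i < length K"
  shows "fst (rotate1 (cyc_step p K) ! i) = fst (rotate1 K ! i)"
proof -
  have "Suc i mod length K < length K"
    using assms by (cases K) auto
  with assms show ?thesis
    by (simp add: nth_rotate1)
qed

lemma rotate_cyc_step: "rotate i (cyc_step p K) = cyc_step p (rotate i K)"
proof (rule nth_equalityI)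
  fix j
  assume "j < length (rotate i (cyc_step p K))"
  then have j: "j < length K" and "(i + j) mod length K < length K"
    by (cases K; simp)+
  then show "rotate i (cyc_step p K) ! j = cyc_step p (rotate i K) ! j"
    by (simp add: nth_rotate nth_cyc_step rotate1_rotate_swap)
qed simp

lemma cyc_step_add_last:
  assumes "G \<noteq> []"
  shows "cyc_step p (add_last G c) = add_last (lin_step p G) (c + lead_exp p (fst (hd G)))"
proof (rule nth_equalityI)
  fix i
  assume "i < length (cyc_step p (add_last G c))"
  then have i: "i < length G"
    using assms by simp
  have "fst (rotate1 (add_last G c) ! i) = fst (G ! (Suc i mod length G))"
    using assms i by (simp add: nth_rotate1)
  moreover have "Suc i mod length G = (if Suc i = length G then 0 else Suc i)"
    using i by simp
  ultimately show "cyc_step p (add_last G c) ! i = add_last (lin_step p G) (c + lead_exp p (fst (hd G))) ! i"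
    using assms i by (auto simp: nth_cyc_step nth_add_last nth_lin_step hd_conv_nth)
qed (use assms in simp)

lemma cyc_reduced_blocks_cyc_step:
  assumes "cyc_reduced_blocks K"
  shows "cyc_reduced_blocks (cyc_step p K)"
  unfolding cyc_reduced_blocks_def
proof (intro allI impI)
  fix i
  assume i: "i < length (cyc_step p K)" and "snd (cyc_step p K ! i) = 0"
  have succ: "fst (rotate1 (cyc_step p K) ! i) = fst (rotate1 K ! i)"
    using i by (simp add: fst_nth_rotate1_cyc_step)
  show "fst (cyc_step p K ! i) = fst (rotate1 (cyc_step p K) ! i)"
  proof (rule ccontr)
    assume "fst (cyc_step p K ! i) \<noteq> fst (rotate1 (cyc_step p K) ! i)"
    then have "fst (K ! i) \<noteq> fst (rotate1 K ! i)"
      using i succ by (simp add: nth_cyc_step)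
    with \<open>snd (cyc_step p K ! i) = 0\<close> i have "snd (K ! i) = 0"
      by (simp add: nth_cyc_step trail_exp_lead_exp_cancel add.assoc)
    with assms i \<open>fst (K ! i) \<noteq> fst (rotate1 K ! i)\<close> show False
      by (simp add: cyc_reduced_blocks_def)
  qed
qed

lemma free_reduce_image_blocks:
  "G \<noteq> [] \<Longrightarrow> free_reduce (xs @ concat (map (img (transvection g p)) (blocks g G))) =
     free_reduce (xs @ gpow (other g) (lead_exp p (fst (hd G))) @ blocks g (lin_step p G))"
proof (induction p G arbitrary: xs rule: lin_step.induct)
  case (2 p s b)
  have "free_reduce (xs @ concat (map (img (transvection g p)) (blocks g [(s, b)]))) =
      free_reduce ((xs @ gpow (other g) (lead_exp p s) @ [(g, s)]) @
        gpow (other g) (trail_exp p s) @ gpow (other g) b @ [])"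
    by (simp add: img_transvection img_transvection_gpow)
  also have "\<dots> = free_reduce ((xs @ gpow (other g) (lead_exp p s) @ [(g, s)]) @
        gpow (other g) (trail_exp p s + b) @ [])"
    by (rule free_reduce_gpow_append)
  finally show ?case
    by (simp add: add.commute)
next
  case (3 p s b s' b' K)
  let ?h = "other g" and ?xs = "xs @ gpow (other g) (lead_exp p s) @ [(g, s)]"
  have "free_reduce (xs @ concat (map (img (transvection g p)) (blocks g ((s, b) # (s', b') # K)))) =
      free_reduce ((?xs @ gpow ?h (trail_exp p s) @ gpow ?h b) @
        concat (map (img (transvection g p)) (blocks g ((s', b') # K))))"
    by (simp add: img_transvection img_transvection_gpow)
  also have "\<dots> = free_reduce (?xs @ gpow ?h (trail_exp p s) @ gpow ?h b @
      gpow ?h (lead_exp p s') @ blocks g (lin_step p ((s', b') # K)))"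
    using "3.IH"[of "?xs @ gpow ?h (trail_exp p s) @ gpow ?h b"] by simp
  also have "\<dots> = free_reduce (?xs @ gpow ?h (trail_exp p s + b) @
      gpow ?h (lead_exp p s') @ blocks g (lin_step p ((s', b') # K)))"
    by (rule free_reduce_gpow_append)
  also have "\<dots> = free_reduce (?xs @ gpow ?h (trail_exp p s + b + lead_exp p s') @
      blocks g (lin_step p ((s', b') # K)))"
    by (rule free_reduce_gpow_append)
  finally show ?case
    by (simp add: ac_simps)
qed simp

lemma apply_transvection_block_form:
  assumes "block_form g K u" and "cyc_reduced_blocks K"
  shows "block_form g (cyc_step p K) (apply_aut (transvection g p) u)"
proof -
  obtain c G where u: "u = gpow (other g) c @ blocks g G" and "G \<noteq> []" and K: "K = add_last G c"
    using assms(1) by (auto simp: block_form_def)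
  define a where "a = c + lead_exp p (fst (hd G))"
  define K' where "K' = cyc_step p K"
  have "K' \<noteq> []" and "cyc_reduced_blocks K'"
    using assms(2) cyc_reduced_blocks_cyc_step by (auto simp: K'_def K)
  have "free_reduce (concat (map (img (transvection g p)) u)) =
      free_reduce (gpow (other g) c @ gpow (other g) (lead_exp p (fst (hd G))) @ blocks g (lin_step p G))"
    using free_reduce_image_blocks[OF \<open>G \<noteq> []\<close>, of "gpow (other g) c"] by (simp add: u img_transvection_gpow)
  also have "\<dots> = free_reduce (gpow (other g) a @ blocks g (lin_step p G))"
    using free_reduce_gpow_append[of "[]"] by (simp add: a_def)
  also have "lin_step p G = add_last K' (- a)"
    using cyc_step_add_last[OF \<open>G \<noteq> []\<close>, of p c] \<open>G \<noteq> []\<close>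
    by (simp add: K'_def K a_def add_last_add add_last_0)
  also have "freely_reduced (gpow (other g) a @ blocks g (add_last K' (- a)))"
    using freely_reduced_blocks_add_last[OF \<open>cyc_reduced_blocks K'\<close>]
    by (cases "a = 0") (simp_all add: freely_reduced_append freely_reduced_gpow hd_blocks last_gpow)
  then have "free_reduce (gpow (other g) a @ blocks g (add_last K' (- a))) =
      gpow (other g) a @ blocks g (add_last K' (- a))"
    by (rule free_reduce_id)
  finally show ?thesis
    using cyc_strip_block_form[OF \<open>K' \<noteq> []\<close> \<open>cyc_reduced_blocks K'\<close>, of g a]
    by (simp add: apply_aut_def cyc_reduce_def K'_def)
qed

lemma apply_transvection_no_letter:
  assumes "cyc_reduced u" and "\<forall>x\<in>set u. fst x \<noteq> g"
  shows "apply_aut (transvection g p) u = u"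
proof -
  have "concat (map (img (transvection g p)) u) = u"
    using assms(2) by (induction u) (simp_all add: img_transvection_fixes)
  with assms(1) show ?thesis
    by (simp add: apply_aut_def cyc_reduce_def free_reduce_id cyc_strip_id cyc_reduced_def)
qed

section \<open>Bad letters\<close>

abbreviation letters_of :: "gen \<Rightarrow> word \<Rightarrow> word" where
  "letters_of g w \<equiv> filter (\<lambda>x. fst x = g) w"

lemma letters_of_gpow_other [simp]: "letters_of g (gpow (other g) b) = []"
  by (simp add: gpow_def)

lemma letters_of_blocks_self: "letters_of g (blocks g K) = map (\<lambda>(s, _). (g, s)) K"
  by (induction K) auto

lemma letters_of_blocks_other: "letters_of g (blocks (other g) K) = concat (map (\<lambda>(_, b). gpow g b) K)"
proof (induction K)
  case (Cons x K)
  then show ?case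
    by (cases x) (simp add: gpow_def)
qed simp

(* The first letter h^e (h = other g) of the cyclic word v is bad for transvection g p if its
   nearest g-letters on both sides equal g^S with S = (e \<noteq> p): it then lies in a subword
   g^S h^r g^S across which the transvection cancels properly, like x y^-r x for sigma. *)
fun bad_head :: "gen \<Rightarrow> bool \<Rightarrow> word \<Rightarrow> bool" where
  "bad_head g p [] \<longleftrightarrow> False"
| "bad_head g p ((a, e) # w) \<longleftrightarrow> a = other g \<and> letters_of g w \<noteq> [] \<and>
     hd (letters_of g w) = (g, e \<noteq> p) \<and> last (letters_of g w) = (g, e \<noteq> p)"

lemma bad_head_letters_of: "bad_head g p v \<Longrightarrow> letters_of g (tl v) \<noteq> []"
  by (cases "(g, p, v)" rule: bad_head.cases) auto

definition bad_count :: "gen \<Rightarrow> bool \<Rightarrow> word \<Rightarrow> nat" where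
  "bad_count g p u = (\<Sum>j<length u. if bad_head g p (rotate j u) then 1 else 0)"

lemma bad_count_le_length: "bad_count g p u \<le> length u"
proof -
  have "bad_count g p u \<le> (\<Sum>j<length u. 1)"
    unfolding bad_count_def by (intro sum_mono) simp
  then show ?thesis
    by simp
qed

lemma bad_count_eq_0_iff: "bad_count g p u = 0 \<longleftrightarrow> (\<forall>j<length u. \<not> bad_head g p (rotate j u))"
  by (auto simp: bad_count_def)

lemma bad_count_rotate1: "bad_count g p (rotate1 u) = bad_count g p u"
proof (cases u)
  case (Cons a w)
  define f where "f j = (if bad_head g p (rotate j u) then 1 else 0 :: nat)" for j
  have n: "length u = Suc (length w)"
    using Cons by simp
  have "rotate j (rotate1 u) = rotate (Suc j) u" for j
    by (simp add: rotate1_rotate_swap)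
  then have "bad_count g p (rotate1 u) = (\<Sum>j<Suc (length w). f (Suc j))"
    by (simp add: bad_count_def f_def n del: rotate_Suc)
  also have "\<dots> = (\<Sum>j<length w. f (Suc j)) + f 0"
    using n by (simp add: f_def del: rotate_Suc)
  also have "\<dots> = (\<Sum>j<Suc (length w). f j)"
    by (simp only: sum.lessThan_Suc_shift add.commute)
  also have "\<dots> = bad_count g p u"
    by (simp add: bad_count_def f_def n)
  finally show ?thesis .
qed simp

lemma bad_count_rotate: "bad_count g p (rotate q u) = bad_count g p u"
  by (induction q) (simp_all add: bad_count_rotate1)

lemma bad_count_block_form: "block_form h K u \<Longrightarrow> bad_count g p u = bad_count g p (blocks h K)"
  by (metis bad_count_rotate block_form_rotate)

lemma bad_count_no_letter:
  assumes "\<forall>x\<in>set u. fst x \<noteq> g"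
  shows "bad_count g p u = 0"
proof -
  have "set (tl (rotate j u)) \<subseteq> set u" for j
    by (cases "rotate j u") (auto simp flip: set_rotate[of j u])
  then have "letters_of g (tl (rotate j u)) = []" for j
    using assms by (auto simp: filter_empty_conv)
  then show ?thesis
    using bad_head_letters_of unfolding bad_count_eq_0_iff by metis
qed

lemma bad_count_blocks:
  "bad_count g p (blocks x K) = (\<Sum>i<length K. \<Sum>m<Suc (nat \<bar>snd (K ! i)\<bar>).
     if bad_head g p (rotate m (blocks x (rotate i K))) then 1 else 0)"
proof -
  define L where "L = map (\<lambda>(s, b). (x, s) # gpow (other x) b) K"
  have "blocks x (rotate i K) = concat (rotate i L)" for i
    by (simp add: L_def blocks_def rotate_map)
  moreover have "i < length K \<Longrightarrow> length (L ! i) = Suc (nat \<bar>snd (K ! i)\<bar>)" for i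
    by (simp add: L_def split: prod.split)
  ultimately show ?thesis
    using sum_rotate_concat[of "\<lambda>v. if bad_head g p v then 1 else 0" L]
    by (simp add: bad_count_def L_def blocks_def flip: rotate0)
qed

definition bad_block :: "bool \<Rightarrow> bool \<Rightarrow> int \<Rightarrow> bool \<Rightarrow> bool" where
  "bad_block p s b s' \<longleftrightarrow> s = s' \<and> b \<noteq> 0 \<and> s = ((0 < b) \<noteq> p)"

definition block_weight :: "bool \<Rightarrow> bool \<Rightarrow> int \<Rightarrow> bool \<Rightarrow> nat" where
  "block_weight p s b s' = (if bad_block p s b s' then nat \<bar>b\<bar> else 0)"

definition bad_weight :: "bool \<Rightarrow> (bool \<times> int) list \<Rightarrow> nat" where
  "bad_weight p K = (\<Sum>i<length K. block_weight p (fst (K ! i)) (snd (K ! i)) (fst (rotate1 K ! i)))"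

lemma bad_head_rotate_blocks_self:
  assumes "m \<le> nat \<bar>b\<bar>"
  shows "bad_head g p (rotate m (blocks g ((s, b) # K))) \<longleftrightarrow>
    0 < m \<and> bad_block p s b (fst (hd (K @ [(s, b)])))"
proof (cases "m = 0")
  case False
  define v where "v = blocks g ((s, b) # K)"
  have "m < length v"
    using assms by (simp add: v_def)
  moreover have "v ! m = (other g, 0 < b)"
    unfolding v_def using False assms by (intro nth_blocks_Cons) auto
  ultimately have "rotate m v = (other g, 0 < b) # drop (Suc m) v @ take m v"
    by (simp add: rotate_conv_nth_Cons)
  moreover have "letters_of g (drop (Suc m) v @ take m v) = map (\<lambda>(s, _). (g, s)) (K @ [(s, b)])"
    using False assms by (cases m) (simp_all add: v_def gpow_def letters_of_blocks_self)
  moreover have "b \<noteq> 0"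
    using False assms by auto
  ultimately show ?thesis
    using False by (cases K) (auto simp: v_def bad_block_def)
qed simp

lemma bad_count_blocks_self: "bad_count g p (blocks g K) = bad_weight p K"
  unfolding bad_count_blocks bad_weight_def
proof (intro sum.cong refl)
  fix i
  assume "i \<in> {..<length K}"
  then obtain K' where rot: "rotate i K = K ! i # K'" and next_head: "hd (K' @ [K ! i]) = rotate1 K ! i"
    using rotate_Cons_nth by blast
  obtain s b where Ki: "K ! i = (s, b)"
    by (cases "K ! i")
  have "(\<Sum>m<Suc (nat \<bar>b\<bar>). if bad_head g p (rotate m (blocks g ((s, b) # K'))) then 1 else 0) =
      (\<Sum>m<Suc (nat \<bar>b\<bar>). if 0 < m \<and> bad_block p s b (fst (rotate1 K ! i)) then 1 else (0::nat))"
    using bad_head_rotate_blocks_self next_head Ki by (intro sum.cong) auto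
  also have "\<dots> = block_weight p s b (fst (rotate1 K ! i))"
    by (simp add: block_weight_def sum.lessThan_Suc_shift del: sum.lessThan_Suc)
  finally show "(\<Sum>m<Suc (nat \<bar>snd (K ! i)\<bar>). if bad_head g p (rotate m (blocks g (rotate i K))) then 1 else 0) =
      block_weight p (fst (K ! i)) (snd (K ! i)) (fst (rotate1 K ! i))"
    using rot Ki by simp
qed

lemma bad_block_cyc_step:
  "bad_block p s (b + trail_exp p s + lead_exp p s') s' \<Longrightarrow>
     bad_block p s b s' \<and> nat \<bar>b + trail_exp p s + lead_exp p s'\<bar> < nat \<bar>b\<bar>"
  by (cases s; cases s'; cases p) (auto simp: bad_block_def lead_exp_def trail_exp_def)

lemma block_weight_cyc_step:
  shows "block_weight p s (b + trail_exp p s + lead_exp p s') s' \<le> block_weight p s b s'"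
    and "0 < block_weight p s b s' \<Longrightarrow> block_weight p s (b + trail_exp p s + lead_exp p s') s' < block_weight p s b s'"
  using bad_block_cyc_step[of p s b s'] by (auto simp: block_weight_def split: if_splits)

lemma bad_weight_cyc_step: "bad_weight p (cyc_step p K) \<le> bad_weight p K - 1"
  unfolding bad_weight_def length_cyc_step
  using block_weight_cyc_step
  by (intro sum_le_diff_one) (simp_all add: nth_cyc_step fst_nth_rotate1_cyc_step)

lemma not_bad_head_rotate_blocks_other:
  assumes "0 < m" "m \<le> nat \<bar>b\<bar>"
  shows "\<not> bad_head g p (rotate m (blocks (other g) ((s, b) # K)))"
proof -
  have "blocks (other g) ((s, b) # K) ! m = (g, 0 < b)"
    using nth_blocks_Cons[OF assms, of "other g" s K] by simp
  moreover have "m < length (blocks (other g) ((s, b) # K))"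
    using assms by simp
  ultimately show ?thesis
    by (simp add: rotate_conv_nth_Cons)
qed

lemma bad_count_blocks_other:
  "bad_count g p (blocks (other g) K) = (\<Sum>i<length K. if bad_head g p (blocks (other g) (rotate i K)) then 1 else 0)"
  unfolding bad_count_blocks
proof (intro sum.cong refl)
  fix i
  assume "i \<in> {..<length K}"
  then obtain K' where rot: "rotate i K = K ! i # K'"
    using rotate_Cons_nth by blast
  obtain s b where Ki: "K ! i = (s, b)"
    by (cases "K ! i")
  have "\<not> bad_head g p (rotate (Suc m) (blocks (other g) ((s, b) # K')))" if "m < nat \<bar>b\<bar>" for m
    using that by (intro not_bad_head_rotate_blocks_other) auto
  then show "(\<Sum>m<Suc (nat \<bar>snd (K ! i)\<bar>). if bad_head g p (rotate m (blocks (other g) (rotate i K))) then 1 else 0) =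
      (if bad_head g p (blocks (other g) (rotate i K)) then 1 else 0)"
    using rot Ki by (simp add: sum.lessThan_Suc_shift del: sum.lessThan_Suc)
qed

(* The powers of g next to the head h^e of a block of blocks (other g) K never acquire the sign
   that would make h^e bad. *)
lemma good_sign_after_head_cyc_step:
  "\<not> (a \<noteq> 0 \<and> (0 < a) = (e \<noteq> p)) \<Longrightarrow> (a = 0 \<longrightarrow> e = e') \<Longrightarrow>
     a + trail_exp p e + lead_exp p e' \<noteq> 0 \<and> (0 < a + trail_exp p e + lead_exp p e') \<noteq> (e \<noteq> p)"
  by (cases e; cases e'; cases p) (auto simp: lead_exp_def trail_exp_def)

lemma good_sign_before_head_cyc_step:
  "\<not> (a \<noteq> 0 \<and> (0 < a) = (e \<noteq> p)) \<Longrightarrow> (a = 0 \<longrightarrow> e' = e) \<Longrightarrow>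
     a + trail_exp p e' + lead_exp p e \<noteq> 0 \<and> (0 < a + trail_exp p e' + lead_exp p e) \<noteq> (e \<noteq> p)"
  by (cases e; cases e'; cases p) (auto simp: lead_exp_def trail_exp_def)

lemma bad_head_blocks_other:
  assumes "K \<noteq> []"
  shows "bad_head g p (blocks (other g) K) \<longleftrightarrow> letters_of g (blocks (other g) K) \<noteq> [] \<and>
    hd (letters_of g (blocks (other g) K)) = (g, fst (K ! 0) \<noteq> p) \<and>
    last (letters_of g (blocks (other g) K)) = (g, fst (K ! 0) \<noteq> p)"
  using assms by (cases K) auto

lemma hd_letters_of_blocks_other:
  "K \<noteq> [] \<Longrightarrow> snd (K ! 0) \<noteq> 0 \<Longrightarrow> hd (letters_of g (blocks (other g) K)) = (g, 0 < snd (K ! 0))"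
  by (cases K) (auto simp: letters_of_blocks_other hd_gpow)

lemma last_letters_of_blocks_other:
  assumes "K \<noteq> []" "snd (last K) \<noteq> 0"
  shows "last (letters_of g (blocks (other g) K)) = (g, 0 < snd (last K))"
proof -
  obtain L x where "K = L @ [x]"
    using assms(1) by (cases K rule: rev_cases) auto
  with assms(2) show ?thesis
    by (cases x) (simp add: letters_of_blocks_other last_gpow)
qed

lemma bad_head_blocks_other_cyc_step:
  assumes "K \<noteq> []" "cyc_reduced_blocks K" "bad_head g p (blocks (other g) (cyc_step p K))"
  shows "bad_head g p (blocks (other g) K)"
proof -
  define t where "t = length K - 1"
  define S where "S = (fst (K ! 0) \<noteq> p)"
  have t: "t < length K" "Suc t = length K" "rotate1 K ! t = K ! 0" "last K = K ! t"
    using assms(1) by (auto simp: t_def nth_rotate1 last_conv_nth)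
  have zero: "0 < length K"
    using assms(1) by simp
  have bad_step: "letters_of g (blocks (other g) (cyc_step p K)) \<noteq> []"
    "hd (letters_of g (blocks (other g) (cyc_step p K))) = (g, S)"
    "last (letters_of g (blocks (other g) (cyc_step p K))) = (g, S)"
    using assms(3) zero by (simp_all add: bad_head_blocks_other S_def)
  have first: "snd (K ! 0) \<noteq> 0 \<and> (0 < snd (K ! 0)) = S"
  proof (rule ccontr)
    assume "\<not> ?thesis"
    then have "snd (cyc_step p K ! 0) \<noteq> 0 \<and> (0 < snd (cyc_step p K ! 0)) \<noteq> S"
      using assms(2) zero good_sign_after_head_cyc_step[of "snd (K ! 0)" "fst (K ! 0)" p "fst (rotate1 K ! 0)"]
      by (simp add: nth_cyc_step cyc_reduced_blocks_def S_def)
    with bad_step(2) zero show False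
      by (simp add: hd_letters_of_blocks_other)
  qed
  have last: "snd (K ! t) \<noteq> 0 \<and> (0 < snd (K ! t)) = S"
  proof (rule ccontr)
    assume "\<not> ?thesis"
    then have "snd (cyc_step p K ! t) \<noteq> 0 \<and> (0 < snd (cyc_step p K ! t)) \<noteq> S"
      using assms(2) t good_sign_before_head_cyc_step[of "snd (K ! t)" "fst (K ! 0)" p "fst (K ! t)"]
      by (simp add: nth_cyc_step cyc_reduced_blocks_def S_def)
    moreover have "last (cyc_step p K) = cyc_step p K ! t"
      using assms(1) by (simp add: last_conv_nth t_def)
    ultimately show False
      using bad_step(3) assms(1) last_letters_of_blocks_other[of "cyc_step p K" g] by simp
  qed
  have "letters_of g (blocks (other g) K) \<noteq> []"
    using first assms(1) by (cases K) (auto simp: letters_of_blocks_other)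
  then show ?thesis
    using first last t assms(1)
    by (simp add: bad_head_blocks_other hd_letters_of_blocks_other last_letters_of_blocks_other S_def)
qed

lemma bad_count_blocks_other_cyc_step:
  assumes "cyc_reduced_blocks K"
  shows "bad_count g p (blocks (other g) (cyc_step p K)) \<le> bad_count g p (blocks (other g) K)"
  unfolding bad_count_blocks_other length_cyc_step
proof (intro sum_mono)
  fix i
  assume "i \<in> {..<length K}"
  then have "rotate i K \<noteq> []"
    by auto
  then show "(if bad_head g p (blocks (other g) (rotate i (cyc_step p K))) then 1 else 0) \<le>
      (if bad_head g p (blocks (other g) (rotate i K)) then 1 else (0::nat))"
    using bad_head_blocks_other_cyc_step cyc_reduced_blocks_rotate[OF assms] by (simp add: rotate_cyc_step)
qed

lemma bad_count_transvection_self: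
  assumes "cyc_reduced u"
  shows "bad_count g p (apply_aut (transvection g p) u) \<le> bad_count g p u - 1"
proof (cases "\<exists>x\<in>set u. fst x = g")
  case True
  then obtain K where K: "block_form g K u"
    using block_form_exists[OF assms] by blast
  then have "block_form g (cyc_step p K) (apply_aut (transvection g p) u)"
    using assms by (intro apply_transvection_block_form cyc_reduced_blocks_of_block_form)
  then have "bad_count g p (apply_aut (transvection g p) u) = bad_weight p (cyc_step p K)"
    by (simp add: bad_count_block_form bad_count_blocks_self)
  also have "\<dots> \<le> bad_weight p K - 1"
    by (rule bad_weight_cyc_step)
  also have "bad_weight p K = bad_count g p u"
    using K by (simp add: bad_count_block_form bad_count_blocks_self)
  finally show ?thesis .
qed (use assms apply_transvection_no_letter bad_count_no_letter in auto)

lemma bad_count_transvection_other: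
  assumes "cyc_reduced u"
  shows "bad_count g p (apply_aut (transvection (other g) p) u) \<le> bad_count g p u"
proof (cases "\<exists>x\<in>set u. fst x = other g")
  case True
  then obtain K where K: "block_form (other g) K u"
    using block_form_exists[OF assms] by blast
  then have "cyc_reduced_blocks K"
    using assms by (rule cyc_reduced_blocks_of_block_form)
  moreover from K this have "block_form (other g) (cyc_step p K) (apply_aut (transvection (other g) p) u)"
    by (rule apply_transvection_block_form)
  ultimately show ?thesis
    using K bad_count_blocks_other_cyc_step by (simp add: bad_count_block_form)
qed (use assms apply_transvection_no_letter in auto)

section \<open>Proper cancellation happens next to bad letters\<close>

lemma cancel_at_transvection_cases:
  assumes "last (img (transvection g p) x) = inv_letter (hd (img (transvection g p) y))"
    and "y \<noteq> inv_letter x"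
  shows "(x = (g, True) \<and> y = (other g, \<not> p)) \<or> (x = (other g, p) \<and> y = (g, False))"
proof -
  obtain a s b t where "x = (a, s)" "y = (b, t)"
    by (cases x, cases y)
  moreover have "a = g \<or> a = other g" and "b = g \<or> b = other g"
    using neq_imp_eq_other by blast+
  ultimately show ?thesis
    using assms by (cases s; cases t; auto simp: img_transvection_letters)
qed

lemma trivial_at_rotateI:
  assumes rot: "rotate s u = (conj_gen \<alpha>, True) # replicate r (other_gen \<alpha>, e) @ (conj_gen \<alpha>, False) # w"
    and "0 < r" "k \<le> r"
  shows "trivial_at \<alpha> u ((s + k) mod length u)"
proof -
  have n: "length u = r + 2 + length w"
    using arg_cong[OF rot, of length] by simp
  have at: "u ! ((s + j) mod length u) = rotate s u ! j" if "j < length u" for j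
    using nth_rotate[OF that] by simp
  have "u ! (s mod length u) = (conj_gen \<alpha>, True)"
    using at[of 0] n rot by simp
  moreover have "u ! ((s + r + 1) mod length u) = (conj_gen \<alpha>, False)"
    using at[of "r + 1"] n rot by (simp add: nth_append)
  moreover have "\<forall>j\<in>{1..r}. u ! ((s + j) mod length u) = (other_gen \<alpha>, e)"
    using at n rot by (auto simp: nth_append)
  ultimately show ?thesis
    unfolding trivial_at_def Let_def using assms(2,3) n
    by (intro exI[of _ s] exI[of _ r] exI[of _ e]) auto
qed

(* Across a cancelling boundary the run of h is closed by g^-1 on the right resp. by g on the
   left, since otherwise its letter next to the boundary would be bad. *)
lemma trivial_at_of_not_bad_right:
  assumes cr: "cyc_reduced u" and i: "i < length u"
    and x: "u ! i = (g, True)" and y: "u ! (Suc i mod length u) = (other g, \<not> p)"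
    and not_bad: "\<not> bad_head g p (rotate (Suc i) u)"
  shows "trivial_at (transvection g p) u i"
proof -
  have "1 < length u"
    using i x y by (cases "length u = 1") auto
  then obtain ys where rot: "rotate i u = (g, True) # (other g, \<not> p) # ys"
    using rotate_nth_Cons_Cons[OF i] x y by metis
  then have "rotate (Suc i) u = (other g, \<not> p) # ys @ [(g, True)]"
    by simp
  with not_bad obtain z rest where "letters_of g ys = z # rest" and "z \<noteq> (g, True)"
    by (cases "letters_of g ys") auto
  then obtain zs w where ys: "ys = zs @ z # w" and zs: "\<forall>v\<in>set zs. fst v \<noteq> g" and "fst z = g"
    by (auto dest!: filter_eq_ConsD)
  with \<open>z \<noteq> (g, True)\<close> have z: "z = (g, False)"
    by (cases z) auto
  have "(other g, \<not> p) # zs = replicate (Suc (length zs)) (other g, \<not> p)"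
    using cyc_reduced_run_Cons[OF cr, of i "[(g, True)]" "(other g, \<not> p)" zs "z # w"] rot ys zs neq_imp_eq_other
    by auto
  with rot ys z have "rotate i u = (conj_gen (transvection g p), True) #
      replicate (Suc (length zs)) (other_gen (transvection g p), \<not> p) @ (conj_gen (transvection g p), False) # w"
    by simp
  from trivial_at_rotateI[OF this, of 0] i show ?thesis
    by simp
qed

lemma trivial_at_of_not_bad_left:
  assumes cr: "cyc_reduced u" and i: "i < length u"
    and x: "u ! i = (other g, p)" and y: "u ! (Suc i mod length u) = (g, False)"
    and not_bad: "\<not> bad_head g p (rotate i u)"
  shows "trivial_at (transvection g p) u i"
proof -
  have "1 < length u"
    using i x y by (cases "length u = 1") auto
  then obtain ys where rot: "rotate i u = (other g, p) # (g, False) # ys"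
    using rotate_nth_Cons_Cons[OF i] x y by metis
  with not_bad obtain xs z where last_g: "letters_of g ys = xs @ [z]" and "z \<noteq> (g, False)"
    by (cases "letters_of g ys" rule: rev_cases) auto
  then obtain w zs where ys: "ys = w @ z # zs" and zs: "\<forall>v\<in>set zs. fst v \<noteq> g"
    by (blast dest: filter_eq_snocD)
  have "z \<in> set (letters_of g ys)"
    using last_g by simp
  with \<open>z \<noteq> (g, False)\<close> have z: "z = (g, True)"
    by (cases z) auto
  define l where "l = (other g, p) # (g, False) # w"
  have rot': "rotate (length l + i) u = [(g, True)] @ (zs @ [(other g, p)]) @ (g, False) # w"
    using rot ys z rotate_append[of l "(g, True) # zs"] by (simp add: l_def flip: rotate_rotate)
  then have "zs @ [(other g, p)] = replicate (Suc (length zs)) (other g, p)"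
    using zs neq_imp_eq_other by (intro cyc_reduced_run_snoc[OF cr rot']) auto
  with rot' have "rotate (length l + i) u = (conj_gen (transvection g p), True) #
      replicate (Suc (length zs)) (other_gen (transvection g p), p) @ (conj_gen (transvection g p), False) # w"
    by simp
  from trivial_at_rotateI[OF this, of "Suc (length zs)"]
  have "trivial_at (transvection g p) u ((length l + i + Suc (length zs)) mod length u)"
    by simp
  moreover have "length l + i + Suc (length zs) = i + length u"
    using arg_cong[OF rot, of length] ys by (simp add: l_def)
  then have "(length l + i + Suc (length zs)) mod length u = i"
    using i by (simp only: mod_add_self2 mod_less)
  ultimately show ?thesis
    by simp
qed

lemma proper_cancellation_imp_bad_head:
  assumes "cyc_reduced u" and "proper_cancellation (transvection g p) u"
  shows "\<exists>j<length u. bad_head g p (rotate j u)"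
proof -
  obtain i where i: "i < length u" and cancel: "cancel_at (transvection g p) u i"
    and nontrivial: "\<not> trivial_at (transvection g p) u i"
    using assms(2) by (auto simp: proper_cancellation_def)
  have "u ! (Suc i mod length u) \<noteq> inv_letter (u ! i)"
    using cyc_reduced_nth_Suc_mod[OF assms(1) i] .
  with cancel consider
      "u ! i = (g, True)" "u ! (Suc i mod length u) = (other g, \<not> p)"
    | "u ! i = (other g, p)" "u ! (Suc i mod length u) = (g, False)"
    using cancel_at_transvection_cases unfolding cancel_at_def by blast
  then show ?thesis
  proof cases
    case 1
    then have "bad_head g p (rotate (Suc i mod length u) u)"
      using trivial_at_of_not_bad_right[OF assms(1) i] nontrivial by (metis rotate_conv_mod)
    moreover have "Suc i mod length u < length u"
      using i by (cases u) auto
    ultimately show ?thesis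
      by blast
  next
    case 2
    then show ?thesis
      using trivial_at_of_not_bad_left[OF assms(1) i] nontrivial i by blast
  qed
qed

lemma no_proper_cancellation_of_bad_count:
  "cyc_reduced u \<Longrightarrow> bad_count g p u = 0 \<Longrightarrow> \<not> proper_cancellation (transvection g p) u"
  using proper_cancellation_imp_bad_head by (fastforce simp: bad_count_eq_0_iff)

section \<open>Chains\<close>

lemma cyc_reduced_funpow_apply_aut: "cyc_reduced u \<Longrightarrow> cyc_reduced ((apply_aut \<alpha> ^^ n) u)"
  by (cases n) (simp_all add: cyc_reduced_apply_aut)

lemma cyc_reduced_chain: "cyc_reduced w \<Longrightarrow> cyc_reduced (chain a b l m k w)"
  by (induction k) (simp_all add: cyc_reduced_funpow_apply_aut)

lemma funpow_apply_aut_bound: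
  assumes "cyc_reduced u" and "\<And>v. cyc_reduced v \<Longrightarrow> f (apply_aut \<alpha> v) \<le> f v - d"
  shows "f ((apply_aut \<alpha> ^^ n) u) \<le> f u - d * n"
proof (induction n)
  case (Suc n)
  have "f ((apply_aut \<alpha> ^^ Suc n) u) \<le> f ((apply_aut \<alpha> ^^ n) u) - d"
    using assms(2)[OF cyc_reduced_funpow_apply_aut[OF assms(1)]] by simp
  with Suc.IH show ?case
    by simp
qed simp

lemma chain_bound:
  assumes "cyc_reduced w"
    and a: "\<And>v. cyc_reduced v \<Longrightarrow> f (apply_aut a v) \<le> f v - da"
    and b: "\<And>v. cyc_reduced v \<Longrightarrow> f (apply_aut b v) \<le> f v - db"
  shows "f (chain a b l m k w) \<le> f w - (\<Sum>i=1..k. db * l i + da * m i)"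
proof (induction k)
  case (Suc k)
  let ?c = "chain a b l m k w"
  have c: "cyc_reduced ?c"
    using assms(1) by (rule cyc_reduced_chain)
  then have "cyc_reduced ((apply_aut b ^^ l (Suc k)) ?c)"
    by (rule cyc_reduced_funpow_apply_aut)
  then have "f (chain a b l m (Suc k) w) \<le> f ((apply_aut b ^^ l (Suc k)) ?c) - da * m (Suc k)"
    using funpow_apply_aut_bound[of _ f a da] a by simp
  also have "\<dots> \<le> f ?c - db * l (Suc k) - da * m (Suc k)"
    using funpow_apply_aut_bound[where f = f and \<alpha> = b and d = db, OF c b] by (rule diff_le_mono)
  finally show ?case
    using Suc.IH by simp
qed simp

lemma no_proper_cancellation_chain:
  assumes "cyc_reduced w"
  shows "length w \<le> (\<Sum>i=1..k. l i) \<Longrightarrow>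
      \<not> proper_cancellation (transvection X p) (chain (transvection Y p) (transvection X p) l m k w)"
    and "length w \<le> (\<Sum>i=1..k. m i) \<Longrightarrow>
      \<not> proper_cancellation (transvection Y p) (chain (transvection Y p) (transvection X p) l m k w)"
proof -
  let ?c = "chain (transvection Y p) (transvection X p) l m k w"
  have "bad_count X p ?c \<le> bad_count X p w - (\<Sum>i=1..k. 1 * l i + 0 * m i)"
    using bad_count_transvection_self[of _ X p] bad_count_transvection_other[of _ X p]
    by (intro chain_bound[OF assms]) simp_all
  moreover have "bad_count Y p ?c \<le> bad_count Y p w - (\<Sum>i=1..k. 0 * l i + 1 * m i)"
    using bad_count_transvection_self[of _ Y p] bad_count_transvection_other[of _ Y p]
    by (intro chain_bound[OF assms]) simp_all
  ultimately have "length w \<le> (\<Sum>i=1..k. l i) \<Longrightarrow> bad_count X p ?c = 0"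
    and "length w \<le> (\<Sum>i=1..k. m i) \<Longrightarrow> bad_count Y p ?c = 0"
    using bad_count_le_length[of X p w] bad_count_le_length[of Y p w] by simp_all
  then show "length w \<le> (\<Sum>i=1..k. l i) \<Longrightarrow> \<not> proper_cancellation (transvection X p) ?c"
    and "length w \<le> (\<Sum>i=1..k. m i) \<Longrightarrow> \<not> proper_cancellation (transvection Y p) ?c"
    using no_proper_cancellation_of_bad_count[OF cyc_reduced_chain[OF assms]] by simp_all
qed

theorem lemma2p5:
  fixes w :: word and k :: nat and l m :: "nat \<Rightarrow> nat"
  assumes "cyc_reduced w"
  shows "(length w \<le> (\<Sum>i=1..k. l i) \<longrightarrow>
            \<not> proper_cancellation Sig (chain Tau Sig l m k w))
       \<and> (length w \<le> (\<Sum>i=1..k. m i) \<longrightarrow>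
            \<not> proper_cancellation Tau (chain Tau Sig l m k w))
       \<and> (length w \<le> (\<Sum>i=1..k. l i) \<longrightarrow>
            \<not> proper_cancellation SigInv (chain TauInv SigInv l m k w))
       \<and> (length w \<le> (\<Sum>i=1..k. m i) \<longrightarrow>
            \<not> proper_cancellation TauInv (chain TauInv SigInv l m k w))"
  using no_proper_cancellation_chain[OF assms, where p = True] no_proper_cancellation_chain[OF assms, where p = False]
  by simp

end
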